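(* Suppose the family of sets $\{\tau^{(n)}_{r,s}(B(r,n)):n\ge1,\ 1\le r\le m_n,\ 1\le s\le k(r,n)\}$ is a basis for the topology of $X$. For $n\ge1$ let $\widetilde C(U_n,\mathbb Z)=\{f\in C(U_n,\mathbb Z): f \text{ is constant on } B(r,n) \text{ for each } 1\le r\le m_n\}$. Then the connecting maps $\phi_n$ map $\widetilde C(U_n,\mathbb Z)$ into $\widetilde C(U_{n+1},\mathbb Z)$, and the inclusions $\widetilde C(U_n,\mathbb Z)\subseteq C(U_n,\mathbb Z)$ induce a group isomorphism $$\varinjlim\big(\widetilde C(U_n,\mathbb Z),\phi_n|_{\widetilde C(U_n,\mathbb Z)}\big)\cong\varinjlim\big(C(U_n,\mathbb Z),\phi_n\big).$$
   Context: Let $X$ be a compact metrizable space having a basis of clopen sets. A partial homeomorphism of $X$ is a homeomorphism $\sigma:\mathrm{Dom}(\sigma)\to\mathrm{Ran}(\sigma)$ between clopen subsets of $X$. The composition $\rho\circ\sigma$ has domain $\sigma^{-1}(\mathrm{Ran}(\sigma)\cap\mathrm{Dom}(\rho))$. Data: positive integers $m_n$ ($n\ge1$), $m_0=1$; for each $n\ge1$ and $1\le r\le m_n$ a nonempty clopen set $B(r,n)\subseteq X$, such that for fixed $n$ the sets $B(1,n),\dots,B(m_n,n)$ are pairwise disjoint, a positive integer $\kappa(r,n)$, and partial homeomorphisms $\sigma^{(n)}_{r,s}$ ($1\le s\le\kappa(r,n)$) with $\mathrm{Dom}(\sigma^{(n)}_{r,s})=B(r,n)$. Put $U_n=\bigcup_{r=1}^{m_n}B(r,n)$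 for $n\ge1$ and $U_0=B(1,0)=X$. Standing conditions, for every $n\ge1$: (i) $\sigma^{(n)}_{r,1}$ is the identity map of $B(r,n)$ for all $r$; (ii) for all $r,s$ there is $i\in\{1,\dots,m_{n-1}\}$ with $\sigma^{(n)}_{r,s}(B(r,n))\subseteq B(i,n-1)$; (iii) the sets $\sigma^{(n)}_{r,s}(B(r,n))$ ($1\le r\le m_n$, $1\le s\le\kappa(r,n)$) are pairwise disjoint and their union is $U_{n-1}$. For $n\ge1$ and $1\le r\le m_n$ let $\tau^{(n)}_{r,1},\dots,\tau^{(n)}_{r,k(r,n)}$ enumerate the partial homeomorphisms $\sigma^{(1)}_{r_1,s_1}\circ\cdots\circ\sigma^{(n)}_{r_n,s_n}$ over all index sequences with $r_n=r$ and $\sigma^{(j)}_{r_j,s_j}(B(r_j,j))\subseteq B(r_{j-1},j-1)$ for $2\le j\le n$ (each has domain $B(r,n)$). $C(U_n,\mathbb Z)$ is the group of continuous integer-valued functions on $U_n$, and $\phi_n:C(U_n,\mathbb Z)\to C(U_{n+1},\mathbb Z)$ is the homomorphism defined, for $x\in B(r,n+1)$, by $\phi_n(\xi)(x)=\sum_{s=1}^{\kappa(r,n+1)}\xi(\sigma^{(n+1)}_{r,s}(x))$. *)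

theory Defs
  imports "HOL-Analysis.Analysis" "HOL-Library.Function_Algebras"
begin

text \<open>Data: m n (n \<ge> 1), B n r (the set B(r,n)), kappa n r, sigma n r s (the partial
homeomorphism sigma^(n)_{r,s}, as a total map whose values outside B n r are irrelevant).\<close>

definition mm :: "(nat \<Rightarrow> nat) \<Rightarrow> nat \<Rightarrow> nat" where
  "mm m n = (if n = 0 then 1 else m n)"

definition BB :: "(nat \<Rightarrow> nat \<Rightarrow> 'a set) \<Rightarrow> nat \<Rightarrow> nat \<Rightarrow> 'a set" where
  "BB B n r = (if n = 0 then UNIV else B n r)"

definition UU :: "(nat \<Rightarrow> nat) \<Rightarrow> (nat \<Rightarrow> nat \<Rightarrow> 'a set) \<Rightarrow> nat \<Rightarrow> 'a set" where
  "UU m B n = (\<Union>r\<in>{1..mm m n}. BB B n r)"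

definition clopen_set :: "'a::topological_space set \<Rightarrow> bool" where
  "clopen_set S \<longleftrightarrow> open S \<and> closed S"

definition partial_homeo :: "'a::topological_space set \<Rightarrow> ('a \<Rightarrow> 'a) \<Rightarrow> bool" where
  "partial_homeo D f \<longleftrightarrow> clopen_set D \<and> clopen_set (f ` D) \<and>
     (\<exists>g. homeomorphism D (f ` D) f g)"

definition admissible ::
  "(nat \<Rightarrow> nat) \<Rightarrow> (nat \<Rightarrow> nat \<Rightarrow> 'a set) \<Rightarrow> (nat \<Rightarrow> nat \<Rightarrow> nat) \<Rightarrow>
   (nat \<Rightarrow> nat \<Rightarrow> nat \<Rightarrow> 'a \<Rightarrow> 'a) \<Rightarrow> nat \<Rightarrow> (nat \<Rightarrow> nat) \<Rightarrow> (nat \<Rightarrow> nat) \<Rightarrow> bool" where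
  "admissible m B \<kappa> \<sigma> n rs ss \<longleftrightarrow>
     (\<forall>j\<in>{1..n}. rs j \<in> {1..m j} \<and> ss j \<in> {1..\<kappa> j (rs j)}) \<and>
     (\<forall>j\<in>{2..n}. \<sigma> j (rs j) (ss j) ` B j (rs j) \<subseteq> B (j - 1) (rs (j - 1)))"

fun tau_comp :: "(nat \<Rightarrow> nat \<Rightarrow> nat \<Rightarrow> 'a \<Rightarrow> 'a) \<Rightarrow> nat \<Rightarrow> (nat \<Rightarrow> nat) \<Rightarrow> (nat \<Rightarrow> nat) \<Rightarrow> 'a \<Rightarrow> 'a" where
  "tau_comp \<sigma> 0 rs ss = id"
| "tau_comp \<sigma> (Suc n) rs ss = tau_comp \<sigma> n rs ss \<circ> \<sigma> (Suc n) (rs (Suc n)) (ss (Suc n))"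

definition tau_family ::
  "(nat \<Rightarrow> nat) \<Rightarrow> (nat \<Rightarrow> nat \<Rightarrow> 'a set) \<Rightarrow> (nat \<Rightarrow> nat \<Rightarrow> nat) \<Rightarrow>
   (nat \<Rightarrow> nat \<Rightarrow> nat \<Rightarrow> 'a \<Rightarrow> 'a) \<Rightarrow> 'a set set" where
  "tau_family m B \<kappa> \<sigma> = {tau_comp \<sigma> n rs ss ` B n (rs n) | n rs ss.
       n \<ge> 1 \<and> admissible m B \<kappa> \<sigma> n rs ss}"

text \<open>C(U_n,Z): continuous integer functions on U_n, represented canonically as
functions on the whole space vanishing outside U_n.\<close>
definition CU :: "(nat \<Rightarrow> nat) \<Rightarrow> (nat \<Rightarrow> nat \<Rightarrow> 'a::topological_space set) \<Rightarrow> nat \<Rightarrow> ('a \<Rightarrow> int) set" where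
  "CU m B n = {f. continuous_on (UU m B n) f \<and> (\<forall>x. x \<notin> UU m B n \<longrightarrow> f x = 0)}"

definition CUt :: "(nat \<Rightarrow> nat) \<Rightarrow> (nat \<Rightarrow> nat \<Rightarrow> 'a::topological_space set) \<Rightarrow> nat \<Rightarrow> ('a \<Rightarrow> int) set" where
  "CUt m B n = {f \<in> CU m B n. \<forall>r\<in>{1..m n}. \<exists>c. \<forall>x\<in>B n r. f x = c}"

definition phi ::
  "(nat \<Rightarrow> nat) \<Rightarrow> (nat \<Rightarrow> nat \<Rightarrow> 'a set) \<Rightarrow> (nat \<Rightarrow> nat \<Rightarrow> nat) \<Rightarrow>
   (nat \<Rightarrow> nat \<Rightarrow> nat \<Rightarrow> 'a \<Rightarrow> 'a) \<Rightarrow> nat \<Rightarrow> ('a \<Rightarrow> int) \<Rightarrow> 'a \<Rightarrow> int" where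
  "phi m B \<kappa> \<sigma> n \<xi> x = (\<Sum>r = 1..m (Suc n). if x \<in> B (Suc n) r
       then (\<Sum>s = 1..\<kappa> (Suc n) r. \<xi> (\<sigma> (Suc n) r s x)) else 0)"

fun trans_map :: "(nat \<Rightarrow> 'g \<Rightarrow> 'g) \<Rightarrow> nat \<Rightarrow> nat \<Rightarrow> 'g \<Rightarrow> 'g" where
  "trans_map \<phi> n 0 x = x"
| "trans_map \<phi> n (Suc d) x = \<phi> (n + d) (trans_map \<phi> n d x)"

definition dl_rel :: "nat \<Rightarrow> (nat \<Rightarrow> 'g set) \<Rightarrow> (nat \<Rightarrow> 'g \<Rightarrow> 'g) \<Rightarrow> ((nat \<times> 'g) \<times> (nat \<times> 'g)) set" where
  "dl_rel n0 G \<phi> = {((n, x), (m, y)). n0 \<le> n \<and> n0 \<le> m \<and> x \<in> G n \<and> y \<in> G m \<and>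
      (\<exists>k. n \<le> k \<and> m \<le> k \<and> trans_map \<phi> n (k - n) x = trans_map \<phi> m (k - m) y)}"

definition dlim :: "nat \<Rightarrow> (nat \<Rightarrow> 'g set) \<Rightarrow> (nat \<Rightarrow> 'g \<Rightarrow> 'g) \<Rightarrow> (nat \<times> 'g) set set" where
  "dlim n0 G \<phi> = (SIGMA n:{n0..}. G n) // dl_rel n0 G \<phi>"

definition dl_add :: "nat \<Rightarrow> (nat \<Rightarrow> 'g::plus set) \<Rightarrow> (nat \<Rightarrow> 'g \<Rightarrow> 'g) \<Rightarrow>
    (nat \<times> 'g) set \<Rightarrow> (nat \<times> 'g) set \<Rightarrow> (nat \<times> 'g) set" where
  "dl_add n0 G \<phi> A C = (let (n, x) = (SOME p. p \<in> A); (m, y) = (SOME p. p \<in> C); k = max n m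
      in dl_rel n0 G \<phi> `` {(k, trans_map \<phi> n (k - n) x + trans_map \<phi> m (k - m) y)})"

text \<open>Map between direct limits induced by inclusions H n \<subseteq> G n (same connecting maps):
the class of (n,x) is sent to the class of (n,x).\<close>
definition dl_induced :: "nat \<Rightarrow> (nat \<Rightarrow> 'g set) \<Rightarrow> (nat \<Rightarrow> 'g \<Rightarrow> 'g) \<Rightarrow>
    (nat \<times> 'g) set \<Rightarrow> (nat \<times> 'g) set" where
  "dl_induced n0 G \<phi> A = dl_rel n0 G \<phi> `` A"

end

(*
  The inclusions commute with the connecting maps, so they induce an additive injective map
  of direct limits; the content of the theorem is surjectivity: for every f in C(U_n,Z) the
  iterate phi_{K-1} o ... o phi_n f is constant on each B(r,K) once K is large.

  Being continuous into Z, f is locally constant, so by compactness of U_n and the basis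
  assumption it is constant on each block of a finite cover of U_n by tau-blocks. Distinct
  tau-blocks are nested or disjoint (disjointness in (iii) and injectivity of the sigma's), so f
  is constant on every tau-block of a level K above the levels of that cover. Unfolding the phi's,
  the iterate at x in B(r,K) is a sum of values of f along the paths from (r,K) down to level n,
  and extending such a path to level 1 by the identity edges s = 1 shows that it carries B(r,K)
  onto a tau-block of level K contained in U_n.
*)

theory Submission
  imports Defs
begin

section \<open>Direct limits\<close>

lemma trans_map_add:
  "trans_map \<phi> n (a + b) x = trans_map \<phi> (n + a) b (trans_map \<phi> n a x)"
  by (induction b) (auto simp: add.assoc)

lemma trans_map_trans_map:
  assumes "n \<le> k" "k \<le> l"
  shows "trans_map \<phi> k (l - k) (trans_map \<phi> n (k - n) x) = trans_map \<phi> n (l - n) x"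
  using trans_map_add[of \<phi> n "k - n" "l - k" x] assms by simp

lemma trans_map_eq_mono:
  assumes "n \<le> k" "n' \<le> k" "k \<le> l"
    and "trans_map \<phi> n (k - n) x = trans_map \<phi> n' (k - n') x'"
  shows "trans_map \<phi> n (l - n) x = trans_map \<phi> n' (l - n') x'"
  by (metis assms trans_map_trans_map)

lemma trans_map_plus:
  assumes "\<And>n x y. \<phi> n (x + y) = \<phi> n x + \<phi> n y"
  shows "trans_map \<phi> n d (x + y) = trans_map \<phi> n d x + trans_map \<phi> n d y"
  by (induction d) (auto simp: assms)

lemma trans_map_closed:
  assumes closed: "\<And>k x. n0 \<le> k \<Longrightarrow> x \<in> G k \<Longrightarrow> \<phi> k x \<in> G (Suc k)"
    and "n0 \<le> n" "n \<le> k" "x \<in> G n"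
  shows "trans_map \<phi> n (k - n) x \<in> G k"
proof -
  have "trans_map \<phi> n d x \<in> G (n + d)" for d
    by (induction d) (use assms in auto)
  then show ?thesis
    using \<open>n \<le> k\<close> by (metis le_add_diff_inverse)
qed

lemma trans_map_plus_closed:
  assumes "\<And>k x. n0 \<le> k \<Longrightarrow> x \<in> G k \<Longrightarrow> \<phi> k x \<in> G (Suc k)"
    and "\<And>k x y. n0 \<le> k \<Longrightarrow> x \<in> G k \<Longrightarrow> y \<in> G k \<Longrightarrow> x + y \<in> G k"
    and "(n, x) \<in> (SIGMA n:{n0..}. G n)" "(m, y) \<in> (SIGMA n:{n0..}. G n)" "n \<le> k" "m \<le> k"
  shows "trans_map \<phi> n (k - n) x + trans_map \<phi> m (k - m) y \<in> G k"
  using assms trans_map_closed[where G=G, OF assms(1)] by auto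

lemma equiv_dl_rel: "equiv (SIGMA n:{n0..}. G n) (dl_rel n0 G \<phi>)"
proof (rule equivI)
  show "dl_rel n0 G \<phi> \<subseteq> (SIGMA n:{n0..}. G n) \<times> (SIGMA n:{n0..}. G n)"
    by (auto simp: dl_rel_def)
  show "refl_on (SIGMA n:{n0..}. G n) (dl_rel n0 G \<phi>)"
    by (auto simp: refl_on_def dl_rel_def)
  show "sym (dl_rel n0 G \<phi>)"
    by (auto simp: sym_def dl_rel_def)
  show "trans (dl_rel n0 G \<phi>)"
  proof (rule transI, clarify)
    fix n x m y p z
    assume "((n, x), (m, y)) \<in> dl_rel n0 G \<phi>" "((m, y), (p, z)) \<in> dl_rel n0 G \<phi>"
    then obtain k1 k2 where "n0 \<le> n" "x \<in> G n" "n0 \<le> p" "z \<in> G p"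
      and k1: "n \<le> k1" "m \<le> k1" "trans_map \<phi> n (k1 - n) x = trans_map \<phi> m (k1 - m) y"
      and k2: "m \<le> k2" "p \<le> k2" "trans_map \<phi> m (k2 - m) y = trans_map \<phi> p (k2 - p) z"
      unfolding dl_rel_def by auto
    moreover have "trans_map \<phi> n (max k1 k2 - n) x = trans_map \<phi> p (max k1 k2 - p) z"
      using trans_map_eq_mono[OF k1(1,2) _ k1(3)] trans_map_eq_mono[OF k2(1,2) _ k2(3)] by simp
    ultimately show "((n, x), (p, z)) \<in> dl_rel n0 G \<phi>"
      unfolding dl_rel_def by (auto intro!: exI[of _ "max k1 k2"])
  qed
qed

lemma dl_rel_mono: "(\<And>n. H n \<subseteq> G n) \<Longrightarrow> dl_rel n0 H \<phi> \<subseteq> dl_rel n0 G \<phi>"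
  unfolding dl_rel_def by blast

lemma dl_rel_restrict:
  "(a, b) \<in> dl_rel n0 G \<phi> \<Longrightarrow> a \<in> (SIGMA n:{n0..}. H n) \<Longrightarrow> b \<in> (SIGMA n:{n0..}. H n) \<Longrightarrow>
   (a, b) \<in> dl_rel n0 H \<phi>"
  unfolding dl_rel_def by auto

lemma dl_induced_class:
  assumes "\<And>n. H n \<subseteq> G n" "a \<in> (SIGMA n:{n0..}. H n)"
  shows "dl_induced n0 G \<phi> (dl_rel n0 H \<phi> `` {a}) = dl_rel n0 G \<phi> `` {a}"
proof -
  have "dl_rel n0 H \<phi> `` {a} \<subseteq> dl_rel n0 G \<phi> `` {a}"
    using dl_rel_mono[of H G, OF assms(1)] by blast
  moreover have "a \<in> dl_rel n0 H \<phi> `` {a}"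
    using equiv_class_self[OF equiv_dl_rel assms(2)] .
  ultimately show ?thesis
    unfolding dl_induced_def
    using equiv_dl_rel[of n0 G \<phi>] by (auto simp: equiv_def dest: transD)
qed

lemma dlim_classI: "a \<in> (SIGMA n:{n0..}. G n) \<Longrightarrow> dl_rel n0 G \<phi> `` {a} \<in> dlim n0 G \<phi>"
  unfolding dlim_def by (rule quotientI)

lemma inj_on_dl_induced:
  assumes HG: "\<And>n. H n \<subseteq> G n"
  shows "inj_on (dl_induced n0 G \<phi>) (dlim n0 H \<phi>)"
proof (rule inj_onI)
  fix A A' assume "A \<in> dlim n0 H \<phi>" "A' \<in> dlim n0 H \<phi>"
    and eq: "dl_induced n0 G \<phi> A = dl_induced n0 G \<phi> A'"
  then obtain a b where a: "a \<in> (SIGMA n:{n0..}. H n)" "A = dl_rel n0 H \<phi> `` {a}"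
    and b: "b \<in> (SIGMA n:{n0..}. H n)" "A' = dl_rel n0 H \<phi> `` {b}"
    unfolding dlim_def by (metis quotientE)
  have "dl_rel n0 G \<phi> `` {a} = dl_rel n0 G \<phi> `` {b}"
    using eq a b dl_induced_class[OF HG] by simp
  then have "(a, b) \<in> dl_rel n0 G \<phi>"
    using a(1) b(1) HG equiv_class_eq_iff[OF equiv_dl_rel] by blast
  then have "(a, b) \<in> dl_rel n0 H \<phi>"
    using a(1) b(1) by (rule dl_rel_restrict)
  then show "A = A'"
    using a(2) b(2) equiv_class_eq[OF equiv_dl_rel] by simp
qed

lemma dl_induced_image:
  assumes HG: "\<And>n. H n \<subseteq> G n"
    and eventually_in_H: "\<And>n x. n0 \<le> n \<Longrightarrow> x \<in> G n \<Longrightarrow> \<exists>k\<ge>n. trans_map \<phi> n (k - n) x \<in> H k"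
  shows "dl_induced n0 G \<phi> ` dlim n0 H \<phi> = dlim n0 G \<phi>"
proof
  show "dl_induced n0 G \<phi> ` dlim n0 H \<phi> \<subseteq> dlim n0 G \<phi>"
    using HG by (auto simp: dlim_def dl_induced_class elim!: quotientE intro!: quotientI dest: subsetD[OF HG])
  show "dlim n0 G \<phi> \<subseteq> dl_induced n0 G \<phi> ` dlim n0 H \<phi>"
  proof
    fix C assume "C \<in> dlim n0 G \<phi>"
    then obtain n x where nx: "n0 \<le> n" "x \<in> G n" "C = dl_rel n0 G \<phi> `` {(n, x)}"
      unfolding dlim_def by (auto elim!: quotientE)
    obtain k where k: "n \<le> k" "trans_map \<phi> n (k - n) x \<in> H k"
      using eventually_in_H[OF nx(1,2)] by blast
    let ?b = "(k, trans_map \<phi> n (k - n) x)"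
    have bH: "?b \<in> (SIGMA n:{n0..}. H n)" using k nx by auto
    have "((n, x), ?b) \<in> dl_rel n0 G \<phi>"
      unfolding dl_rel_def using k nx HG by (auto intro!: exI[of _ k])
    then have "C = dl_induced n0 G \<phi> (dl_rel n0 H \<phi> `` {?b})"
      using nx(3) equiv_class_eq[OF equiv_dl_rel] dl_induced_class[OF HG bH] by simp
    then show "C \<in> dl_induced n0 G \<phi> ` dlim n0 H \<phi>"
      using bH dlim_classI by blast
  qed
qed

lemma dl_rel_plus:
  fixes \<phi> :: "nat \<Rightarrow> 'g::plus \<Rightarrow> 'g"
  assumes add: "\<And>n x y. \<phi> n (x + y) = \<phi> n x + \<phi> n y"
    and closed: "\<And>k x. n0 \<le> k \<Longrightarrow> x \<in> G k \<Longrightarrow> \<phi> k x \<in> G (Suc k)"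
    and plus_closed: "\<And>k x y. n0 \<le> k \<Longrightarrow> x \<in> G k \<Longrightarrow> y \<in> G k \<Longrightarrow> x + y \<in> G k"
    and x: "((n, x), (n', x')) \<in> dl_rel n0 G \<phi>" and y: "((m, y), (m', y')) \<in> dl_rel n0 G \<phi>"
    and le: "n \<le> k" "m \<le> k" "n' \<le> k'" "m' \<le> k'"
  shows "((k, trans_map \<phi> n (k - n) x + trans_map \<phi> m (k - m) y),
          (k', trans_map \<phi> n' (k' - n') x' + trans_map \<phi> m' (k' - m') y')) \<in> dl_rel n0 G \<phi>"
proof -
  obtain k1 k2 where
    k1: "n \<le> k1" "n' \<le> k1" "trans_map \<phi> n (k1 - n) x = trans_map \<phi> n' (k1 - n') x'" and
    k2: "m \<le> k2" "m' \<le> k2" "trans_map \<phi> m (k2 - m) y = trans_map \<phi> m' (k2 - m') y'"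
    using x y unfolding dl_rel_def by auto
  define l where "l = max (max k1 k2) (max k k')"
  have "trans_map \<phi> k (l - k) (trans_map \<phi> n (k - n) x + trans_map \<phi> m (k - m) y)
      = trans_map \<phi> n (l - n) x + trans_map \<phi> m (l - m) y"
    using le by (simp add: trans_map_plus[where \<phi> = \<phi>, OF add] trans_map_trans_map l_def)
  also have "\<dots> = trans_map \<phi> n' (l - n') x' + trans_map \<phi> m' (l - m') y'"
    using trans_map_eq_mono[OF k1(1,2) _ k1(3)] trans_map_eq_mono[OF k2(1,2) _ k2(3)]
    by (simp add: l_def)
  also have "\<dots> = trans_map \<phi> k' (l - k') (trans_map \<phi> n' (k' - n') x' + trans_map \<phi> m' (k' - m') y')"
    using le by (simp add: trans_map_plus[where \<phi> = \<phi>, OF add] trans_map_trans_map l_def)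
  moreover have "(n, x) \<in> (SIGMA n:{n0..}. G n)" "(m, y) \<in> (SIGMA n:{n0..}. G n)"
    "(n', x') \<in> (SIGMA n:{n0..}. G n)" "(m', y') \<in> (SIGMA n:{n0..}. G n)"
    using x y by (auto simp: dl_rel_def)
  ultimately show ?thesis
    using le trans_map_plus_closed[where G=G, OF closed plus_closed]
    unfolding dl_rel_def by (auto intro!: exI[of _ l] simp: l_def)
qed

lemma dl_add_class:
  fixes \<phi> :: "nat \<Rightarrow> 'g::plus \<Rightarrow> 'g"
  assumes add: "\<And>n x y. \<phi> n (x + y) = \<phi> n x + \<phi> n y"
    and closed: "\<And>k x. n0 \<le> k \<Longrightarrow> x \<in> G k \<Longrightarrow> \<phi> k x \<in> G (Suc k)"
    and plus_closed: "\<And>k x y. n0 \<le> k \<Longrightarrow> x \<in> G k \<Longrightarrow> y \<in> G k \<Longrightarrow> x + y \<in> G k"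
    and x: "(n, x) \<in> (SIGMA n:{n0..}. G n)" and y: "(m, y) \<in> (SIGMA n:{n0..}. G n)"
    and le: "n \<le> k" "m \<le> k"
  shows "dl_add n0 G \<phi> (dl_rel n0 G \<phi> `` {(n, x)}) (dl_rel n0 G \<phi> `` {(m, y)})
       = dl_rel n0 G \<phi> `` {(k, trans_map \<phi> n (k - n) x + trans_map \<phi> m (k - m) y)}"
proof -
  obtain n' x' where x': "(SOME p. p \<in> dl_rel n0 G \<phi> `` {(n, x)}) = (n', x')"
    by (metis prod.exhaust)
  obtain m' y' where y': "(SOME p. p \<in> dl_rel n0 G \<phi> `` {(m, y)}) = (m', y')"
    by (metis prod.exhaust)
  have "((n, x), (n', x')) \<in> dl_rel n0 G \<phi>" "((m, y), (m', y')) \<in> dl_rel n0 G \<phi>"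
    using someI[of "\<lambda>p. p \<in> dl_rel n0 G \<phi> `` {(n, x)}", OF equiv_class_self[OF equiv_dl_rel x]]
      someI[of "\<lambda>p. p \<in> dl_rel n0 G \<phi> `` {(m, y)}", OF equiv_class_self[OF equiv_dl_rel y]]
      x' y' by simp_all
  from dl_rel_plus[where \<phi> = \<phi>, OF add closed plus_closed this le, of "max n' m'"]
  show ?thesis
    unfolding dl_add_def x' y' Let_def by (simp add: equiv_class_eq[OF equiv_dl_rel])
qed

lemma dl_induced_dl_add:
  fixes \<phi> :: "nat \<Rightarrow> 'g::plus \<Rightarrow> 'g"
  assumes HG: "\<And>n. H n \<subseteq> G n"
    and add: "\<And>n x y. \<phi> n (x + y) = \<phi> n x + \<phi> n y"
    and closed_H: "\<And>k x. n0 \<le> k \<Longrightarrow> x \<in> H k \<Longrightarrow> \<phi> k x \<in> H (Suc k)"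
    and closed_G: "\<And>k x. n0 \<le> k \<Longrightarrow> x \<in> G k \<Longrightarrow> \<phi> k x \<in> G (Suc k)"
    and plus_closed_H: "\<And>k x y. n0 \<le> k \<Longrightarrow> x \<in> H k \<Longrightarrow> y \<in> H k \<Longrightarrow> x + y \<in> H k"
    and plus_closed_G: "\<And>k x y. n0 \<le> k \<Longrightarrow> x \<in> G k \<Longrightarrow> y \<in> G k \<Longrightarrow> x + y \<in> G k"
    and A: "A \<in> dlim n0 H \<phi>" and A': "A' \<in> dlim n0 H \<phi>"
  shows "dl_induced n0 G \<phi> (dl_add n0 H \<phi> A A') =
         dl_add n0 G \<phi> (dl_induced n0 G \<phi> A) (dl_induced n0 G \<phi> A')"
proof -
  obtain n x m y where x: "(n, x) \<in> (SIGMA n:{n0..}. H n)" "A = dl_rel n0 H \<phi> `` {(n, x)}"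
    and y: "(m, y) \<in> (SIGMA n:{n0..}. H n)" "A' = dl_rel n0 H \<phi> `` {(m, y)}"
    using A A' unfolding dlim_def by (metis quotientE prod.exhaust)
  define z where "z = trans_map \<phi> n (max n m - n) x + trans_map \<phi> m (max n m - m) y"
  have "dl_add n0 H \<phi> A A' = dl_rel n0 H \<phi> `` {(max n m, z)}"
    unfolding x(2) y(2) z_def by (rule dl_add_class[where G = H and \<phi> = \<phi>, OF add closed_H plus_closed_H x(1) y(1)]) simp_all
  moreover have "(max n m, z) \<in> (SIGMA n:{n0..}. H n)"
    using x(1) y(1) trans_map_plus_closed[where G=H, OF closed_H plus_closed_H x(1) y(1)]
    by (auto simp: z_def)
  moreover have "dl_add n0 G \<phi> (dl_rel n0 G \<phi> `` {(n, x)}) (dl_rel n0 G \<phi> `` {(m, y)})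
      = dl_rel n0 G \<phi> `` {(max n m, z)}"
    unfolding z_def
    by (rule dl_add_class[where G = G and \<phi> = \<phi>, OF add closed_G plus_closed_G]) (use x y HG in auto)
  ultimately show ?thesis
    using x y by (simp add: dl_induced_class[OF HG])
qed

lemma bij_betw_dl_induced:
  assumes "\<And>n. H n \<subseteq> G n"
    and "\<And>n x. n0 \<le> n \<Longrightarrow> x \<in> G n \<Longrightarrow> \<exists>k\<ge>n. trans_map \<phi> n (k - n) x \<in> H k"
  shows "bij_betw (dl_induced n0 G \<phi>) (dlim n0 H \<phi>) (dlim n0 G \<phi>)"
  using assms inj_on_dl_induced dl_induced_image unfolding bij_betw_def by blast

section \<open>The tower of partial homeomorphisms\<close>

lemma constant_on_sum:
  assumes "\<And>s. s \<in> S \<Longrightarrow> g s constant_on A"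
  shows "(\<lambda>x. \<Sum>s\<in>S. g s x) constant_on A"
proof -
  obtain c where "\<And>s x. s \<in> S \<Longrightarrow> x \<in> A \<Longrightarrow> g s x = c s"
    using assms unfolding constant_on_def by metis
  then show ?thesis
    unfolding constant_on_def by (auto intro!: exI[of _ "\<Sum>s\<in>S. c s"] sum.cong)
qed

lemma compact_cover_constant_on_basis:
  fixes f :: "'a::topological_space \<Rightarrow> 'b::discrete_topology"
  assumes basis: "topological_basis \<B>" and U: "compact U" "open U" and f: "continuous_on U f"
  obtains \<F> where "finite \<F>" "\<F> \<subseteq> \<B>" "U \<subseteq> \<Union>\<F>" "\<And>b. b \<in> \<F> \<Longrightarrow> f constant_on b"
proof -
  have "\<exists>b\<in>\<B>. x \<in> b \<and> b \<subseteq> f -` {f x} \<inter> U" if "x \<in> U" for x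
  proof (rule topological_basisE[OF basis])
    show "open (f -` {f x} \<inter> U)"
      using f U(2) by (simp add: continuous_on_open_vimage open_discrete)
  qed (use that in auto)
  then obtain b where b: "\<And>x. x \<in> U \<Longrightarrow> b x \<in> \<B> \<and> x \<in> b x \<and> b x \<subseteq> f -` {f x} \<inter> U"
    by metis
  obtain C where "C \<subseteq> U" "finite C" "U \<subseteq> (\<Union>x\<in>C. b x)"
    using compactE_image[OF U(1), of U b] b topological_basis_open[OF basis] by blast
  moreover have "f constant_on b x" if "x \<in> U" for x
    using b[OF that] unfolding constant_on_def by blast
  ultimately show ?thesis
    using b by (intro that[of "b ` C"]) auto
qed

lemma UU_eq: "1 \<le> n \<Longrightarrow> UU m B n = (\<Union>r\<in>{1..m n}. B n r)"
  by (simp add: UU_def mm_def BB_def)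

lemma phi_plus: "phi m B \<kappa> \<sigma> n (f + g) = phi m B \<kappa> \<sigma> n f + phi m B \<kappa> \<sigma> n g"
  by (auto simp: fun_eq_iff phi_def sum.distrib[symmetric] intro!: sum.cong)

lemma CU_plus: "f \<in> CU m B n \<Longrightarrow> g \<in> CU m B n \<Longrightarrow> f + g \<in> CU m B n"
  by (auto simp: CU_def intro: continuous_on_add)

lemma CUt_plus: "f \<in> CUt m B n \<Longrightarrow> g \<in> CUt m B n \<Longrightarrow> f + g \<in> CUt m B n"
  by (fastforce simp: CUt_def CU_plus)

lemma CUt_subset_CU: "CUt m B n \<subseteq> CU m B n"
  by (simp add: CUt_def)

fun path_map ::
  "(nat \<Rightarrow> nat \<Rightarrow> nat \<Rightarrow> 'a \<Rightarrow> 'a) \<Rightarrow> nat \<Rightarrow> nat \<Rightarrow> (nat \<Rightarrow> nat) \<Rightarrow> (nat \<Rightarrow> nat) \<Rightarrow> 'a \<Rightarrow> 'a"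
  where
    "path_map \<sigma> j 0 rs ss = id"
  | "path_map \<sigma> j (Suc K) rs ss =
      (if Suc K \<le> j then id else path_map \<sigma> j K rs ss \<circ> \<sigma> (Suc K) (rs (Suc K)) (ss (Suc K)))"

lemma path_map_self: "K \<le> j \<Longrightarrow> path_map \<sigma> j K rs ss = id"
  by (cases K) auto

lemma tau_comp_eq_path_map: "tau_comp \<sigma> K rs ss = path_map \<sigma> 0 K rs ss"
  by (induction K) auto

lemma path_map_trans:
  assumes "i \<le> j" "j \<le> K"
  shows "path_map \<sigma> i K rs ss = path_map \<sigma> i j rs ss \<circ> path_map \<sigma> j K rs ss"
  using assms(2)
proof (induction K rule: dec_induct)
  case base
  then show ?case by (simp add: path_map_self)
next
  case (step K)
  then show ?case using assms(1) by (simp add: o_assoc)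
qed

lemma path_map_Suc_left:
  "j < K \<Longrightarrow> path_map \<sigma> j K rs ss = \<sigma> (Suc j) (rs (Suc j)) (ss (Suc j)) \<circ> path_map \<sigma> (Suc j) K rs ss"
  using path_map_trans[of j "Suc j" K \<sigma> rs ss] by (simp add: path_map_self)

lemma path_map_cong:
  "(\<And>i. j < i \<Longrightarrow> i \<le> K \<Longrightarrow> rs i = rs' i \<and> ss i = ss' i) \<Longrightarrow>
   path_map \<sigma> j K rs ss = path_map \<sigma> j K rs' ss'"
  by (induction K) auto

lemma admissible_mono:
  "admissible m B \<kappa> \<sigma> K rs ss \<Longrightarrow> j \<le> K \<Longrightarrow> admissible m B \<kappa> \<sigma> j rs ss"
  unfolding admissible_def by auto

lemma admissible_step:
  "admissible m B \<kappa> \<sigma> K rs ss \<Longrightarrow> 2 \<le> i \<Longrightarrow> i \<le> K \<Longrightarrow>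
   \<sigma> i (rs i) (ss i) ` B i (rs i) \<subseteq> B (i - 1) (rs (i - 1))"
  by (simp add: admissible_def)

locale tower_system =
  fixes m :: "nat \<Rightarrow> nat" and B :: "nat \<Rightarrow> nat \<Rightarrow> 'a::topological_space set"
    and \<kappa> :: "nat \<Rightarrow> nat \<Rightarrow> nat" and \<sigma> :: "nat \<Rightarrow> nat \<Rightarrow> nat \<Rightarrow> 'a \<Rightarrow> 'a"
  assumes compact_space: "compact (UNIV :: 'a set)"
    and B_clopen: "\<And>n r. n \<ge> 1 \<Longrightarrow> r \<in> {1..m n} \<Longrightarrow> clopen_set (B n r)"
    and B_disj: "\<And>n r r'. n \<ge> 1 \<Longrightarrow> r \<in> {1..m n} \<Longrightarrow> r' \<in> {1..m n} \<Longrightarrow> r \<noteq> r' \<Longrightarrow>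
                   B n r \<inter> B n r' = {}"
    and kappa_pos: "\<And>n r. n \<ge> 1 \<Longrightarrow> r \<in> {1..m n} \<Longrightarrow> \<kappa> n r \<ge> 1"
    and sigma_ph: "\<And>n r s. n \<ge> 1 \<Longrightarrow> r \<in> {1..m n} \<Longrightarrow> s \<in> {1..\<kappa> n r} \<Longrightarrow>
                   partial_homeo (B n r) (\<sigma> n r s)"
    and cond_i: "\<And>n r x. n \<ge> 1 \<Longrightarrow> r \<in> {1..m n} \<Longrightarrow> x \<in> B n r \<Longrightarrow> \<sigma> n r 1 x = x"
    and cond_ii: "\<And>n r s. n \<ge> 1 \<Longrightarrow> r \<in> {1..m n} \<Longrightarrow> s \<in> {1..\<kappa> n r} \<Longrightarrow>
                   \<exists>i\<in>{1..mm m (n - 1)}. \<sigma> n r s ` B n r \<subseteq> BB B (n - 1) i"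
    and cond_iii_disj: "\<And>n r s r' s'. n \<ge> 1 \<Longrightarrow> r \<in> {1..m n} \<Longrightarrow> s \<in> {1..\<kappa> n r} \<Longrightarrow>
                   r' \<in> {1..m n} \<Longrightarrow> s' \<in> {1..\<kappa> n r'} \<Longrightarrow> (r, s) \<noteq> (r', s') \<Longrightarrow>
                   \<sigma> n r s ` B n r \<inter> \<sigma> n r' s' ` B n r' = {}"
    and tau_basis: "topological_basis (tau_family m B \<kappa> \<sigma>)"
begin

lemma open_UU: "1 \<le> n \<Longrightarrow> open (UU m B n)"
  using B_clopen by (auto simp: UU_eq clopen_set_def)

lemma compact_UU:
  assumes "1 \<le> n"
  shows "compact (UU m B n)"
proof -
  have "closed (UU m B n)"
    using B_clopen assms by (auto simp: UU_eq clopen_set_def)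
  then show ?thesis
    using compact_Int_closed[OF compact_space] by fastforce
qed

lemma sigma_homeomorphism:
  assumes "1 \<le> n" "r \<in> {1..m n}" "s \<in> {1..\<kappa> n r}"
  obtains g where "homeomorphism (B n r) (\<sigma> n r s ` B n r) (\<sigma> n r s) g"
  using sigma_ph[OF assms] unfolding partial_homeo_def by blast

lemma sigma_inj_on: "1 \<le> n \<Longrightarrow> r \<in> {1..m n} \<Longrightarrow> s \<in> {1..\<kappa> n r} \<Longrightarrow> inj_on (\<sigma> n r s) (B n r)"
proof -
  assume "1 \<le> n" "r \<in> {1..m n}" "s \<in> {1..\<kappa> n r}"
  then obtain g where "homeomorphism (B n r) (\<sigma> n r s ` B n r) (\<sigma> n r s) g"
    by (rule sigma_homeomorphism)
  from homeomorphism_apply1[OF this] show ?thesis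
    by (rule inj_on_inverseI)
qed

lemma sigma_maps_into:
  "1 \<le> n \<Longrightarrow> r \<in> {1..m (Suc n)} \<Longrightarrow> s \<in> {1..\<kappa> (Suc n) r} \<Longrightarrow>
   \<exists>i\<in>{1..m n}. \<sigma> (Suc n) r s ` B (Suc n) r \<subseteq> B n i"
  using cond_ii[of "Suc n" r s] by (simp add: mm_def BB_def)

lemma phi_eq_sum:
  assumes r: "r \<in> {1..m (Suc n)}" and x: "x \<in> B (Suc n) r"
  shows "phi m B \<kappa> \<sigma> n \<xi> x = (\<Sum>s = 1..\<kappa> (Suc n) r. \<xi> (\<sigma> (Suc n) r s x))"
proof -
  have "phi m B \<kappa> \<sigma> n \<xi> x =
      (\<Sum>r' = 1..m (Suc n). if r' = r then \<Sum>s = 1..\<kappa> (Suc n) r'. \<xi> (\<sigma> (Suc n) r' s x) else 0)"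
    unfolding phi_def
  proof (rule sum.cong)
    fix r' assume "r' \<in> {1..m (Suc n)}"
    then show "(if x \<in> B (Suc n) r' then \<Sum>s = 1..\<kappa> (Suc n) r'. \<xi> (\<sigma> (Suc n) r' s x) else 0) =
               (if r' = r then \<Sum>s = 1..\<kappa> (Suc n) r'. \<xi> (\<sigma> (Suc n) r' s x) else 0)"
      using B_disj[of "Suc n" r r'] r x by auto
  qed simp
  also have "\<dots> = (\<Sum>s = 1..\<kappa> (Suc n) r. \<xi> (\<sigma> (Suc n) r s x))"
    using r by simp
  finally show ?thesis .
qed

lemma phi_CU:
  assumes n: "1 \<le> n" and f: "f \<in> CU m B n"
  shows "phi m B \<kappa> \<sigma> n f \<in> CU m B (Suc n)"
proof -
  have "continuous_on (\<Union>r\<in>{1..m (Suc n)}. B (Suc n) r) (phi m B \<kappa> \<sigma> n f)"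
  proof (rule continuous_on_closed_Union)
    fix r assume r: "r \<in> {1..m (Suc n)}"
    show "closed (B (Suc n) r)"
      using B_clopen r by (simp add: clopen_set_def)
    have "continuous_on (B (Suc n) r) (\<lambda>x. f (\<sigma> (Suc n) r s x))" if s: "s \<in> {1..\<kappa> (Suc n) r}" for s
    proof -
      obtain g where "homeomorphism (B (Suc n) r) (\<sigma> (Suc n) r s ` B (Suc n) r) (\<sigma> (Suc n) r s) g"
        using sigma_homeomorphism[of "Suc n" r s] r s by auto
      moreover obtain i where "i \<in> {1..m n}" "\<sigma> (Suc n) r s ` B (Suc n) r \<subseteq> B n i"
        using sigma_maps_into[OF n r s] by blast
      then have "\<sigma> (Suc n) r s ` B (Suc n) r \<subseteq> UU m B n"
        unfolding UU_eq[OF n] by blast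
      moreover have "continuous_on (UU m B n) f"
        using f by (simp add: CU_def)
      ultimately show ?thesis
        by (metis continuous_on_compose2 homeomorphism_cont1)
    qed
    then have "continuous_on (B (Suc n) r) (\<lambda>x. \<Sum>s = 1..\<kappa> (Suc n) r. f (\<sigma> (Suc n) r s x))"
      by (rule continuous_on_sum)
    then show "continuous_on (B (Suc n) r) (phi m B \<kappa> \<sigma> n f)"
      by (rule continuous_on_eq) (simp add: phi_eq_sum[OF r])
  qed simp
  moreover have "phi m B \<kappa> \<sigma> n f x = 0" if "x \<notin> UU m B (Suc n)" for x
    using that by (auto simp: phi_def UU_eq intro!: sum.neutral)
  ultimately show ?thesis
    by (simp add: CU_def UU_eq)
qed

lemma phi_CUt:
  assumes n: "1 \<le> n" and f: "f \<in> CUt m B n"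
  shows "phi m B \<kappa> \<sigma> n f \<in> CUt m B (Suc n)"
proof -
  have "phi m B \<kappa> \<sigma> n f constant_on B (Suc n) r" if r: "r \<in> {1..m (Suc n)}" for r
  proof -
    have summand: "(\<lambda>x. f (\<sigma> (Suc n) r s x)) constant_on B (Suc n) r"
      if s: "s \<in> {1..\<kappa> (Suc n) r}" for s
    proof -
      obtain i where i: "i \<in> {1..m n}" "\<sigma> (Suc n) r s ` B (Suc n) r \<subseteq> B n i"
        using sigma_maps_into[OF n r s] by blast
      then obtain c where "\<forall>x\<in>B n i. f x = c"
        using f unfolding CUt_def by blast
      with i(2) show ?thesis
        unfolding constant_on_def by blast
    qed
    have "(\<lambda>x. \<Sum>s = 1..\<kappa> (Suc n) r. f (\<sigma> (Suc n) r s x)) constant_on B (Suc n) r"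
      by (rule constant_on_sum) (rule summand)
    then show ?thesis
      by (rule constant_onE) (simp add: phi_eq_sum[OF r])
  qed
  then show ?thesis
    using phi_CU[OF n] f by (simp add: CUt_def constant_on_def)
qed

abbreviation tau_block :: "nat \<Rightarrow> (nat \<Rightarrow> nat) \<Rightarrow> (nat \<Rightarrow> nat) \<Rightarrow> 'a set" where
  "tau_block K rs ss \<equiv> tau_comp \<sigma> K rs ss ` B K (rs K)"

text \<open>Paths are encoded by index functions: \<open>rs i\<close> is the block at level \<open>i\<close> and \<open>ss i\<close> the
  edge from level \<open>i\<close> to level \<open>i - 1\<close>; only their values on \<open>{j..K}\<close> matter.\<close>

definition path :: "nat \<Rightarrow> nat \<Rightarrow> (nat \<Rightarrow> nat) \<Rightarrow> (nat \<Rightarrow> nat) \<Rightarrow> bool" where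
  "path j K rs ss \<longleftrightarrow> rs j \<in> {1..m j} \<and>
     (\<forall>i. j < i \<and> i \<le> K \<longrightarrow> rs i \<in> {1..m i} \<and> ss i \<in> {1..\<kappa> i (rs i)} \<and>
        \<sigma> i (rs i) (ss i) ` B i (rs i) \<subseteq> B (i - 1) (rs (i - 1)))"

lemma path_of_admissible:
  "admissible m B \<kappa> \<sigma> K rs ss \<Longrightarrow> 1 \<le> j \<Longrightarrow> j \<le> K \<Longrightarrow> path j K rs ss"
  unfolding admissible_def path_def by auto

lemma path_step:
  "path j K rs ss \<Longrightarrow> j < i \<Longrightarrow> i \<le> K \<Longrightarrow>
   rs i \<in> {1..m i} \<and> ss i \<in> {1..\<kappa> i (rs i)} \<and> \<sigma> i (rs i) (ss i) ` B i (rs i) \<subseteq> B (i - 1) (rs (i - 1))"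
  by (simp add: path_def)

lemma path_mono: "path j K rs ss \<Longrightarrow> K' \<le> K \<Longrightarrow> path j K' rs ss"
  by (simp add: path_def)

lemma path_map_mem:
  assumes "path j K rs ss" "j \<le> K" "x \<in> B K (rs K)"
  shows "path_map \<sigma> j K rs ss x \<in> B j (rs j)"
  using assms(2,1,3)
proof (induction K arbitrary: x rule: dec_induct)
  case base
  then show ?case by (simp add: path_map_self)
next
  case (step k)
  have "\<sigma> (Suc k) (rs (Suc k)) (ss (Suc k)) x \<in> B k (rs k)"
    using path_step[OF step.prems(1), of "Suc k"] step.hyps step.prems(2) by auto
  then show ?case
    using step path_mono[OF step.prems(1), of k] by simp
qed

lemma path_extend:
  assumes p: "path (Suc j) K rs ss" and j: "1 \<le> j" "Suc j \<le> K"
    and s: "s \<in> {1..\<kappa> (Suc j) (rs (Suc j))}"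
  obtains i where "path j K (rs(j := i)) (ss(Suc j := s))"
    "path_map \<sigma> j K (rs(j := i)) (ss(Suc j := s)) = \<sigma> (Suc j) (rs (Suc j)) s \<circ> path_map \<sigma> (Suc j) K rs ss"
proof -
  obtain i where i: "i \<in> {1..m j}" "\<sigma> (Suc j) (rs (Suc j)) s ` B (Suc j) (rs (Suc j)) \<subseteq> B j i"
    using sigma_maps_into[OF j(1) _ s] p by (auto simp: path_def)
  have "path j K (rs(j := i)) (ss(Suc j := s))"
    unfolding path_def
  proof (intro conjI allI impI)
    fix l assume l: "j < l \<and> l \<le> K"
    then consider "l = Suc j" | "Suc j < l" "l - 1 \<noteq> j"
      by linarith
    then show "(rs(j := i)) l \<in> {1..m l}" "(ss(Suc j := s)) l \<in> {1..\<kappa> l ((rs(j := i)) l)}"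
      "\<sigma> l ((rs(j := i)) l) ((ss(Suc j := s)) l) ` B l ((rs(j := i)) l) \<subseteq> B (l - 1) ((rs(j := i)) (l - 1))"
      by (cases; use p i s path_step[OF p, of l] l in \<open>simp add: path_def\<close>)+
  qed (use i in simp)
  moreover have "path_map \<sigma> j K (rs(j := i)) (ss(Suc j := s)) =
      \<sigma> (Suc j) (rs (Suc j)) s \<circ> path_map \<sigma> (Suc j) K rs ss"
    using path_map_Suc_left[of j K \<sigma> "rs(j := i)" "ss(Suc j := s)"]
      path_map_cong[of "Suc j" K "rs(j := i)" rs "ss(Suc j := s)" ss \<sigma>] j by simp
  ultimately show thesis
    using that by blast
qed

lemma path_lower:
  assumes "path j K rs ss" "1 \<le> i" "i \<le> j" "j \<le> K"
  shows "\<exists>rs' ss'. path i K rs' ss' \<and> rs' K = rs K \<and>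
           (\<forall>x\<in>B K (rs K). path_map \<sigma> i K rs' ss' x = path_map \<sigma> j K rs ss x)"
  using assms(3,1)
proof (induction j arbitrary: rs ss rule: dec_induct)
  case base
  then show ?case by blast
next
  case (step j)
  have j: "1 \<le> j" "Suc j \<le> K"
    using step.hyps assms(2,4) by auto
  have "1 \<in> {1..\<kappa> (Suc j) (rs (Suc j))}"
    using step.prems kappa_pos[of "Suc j" "rs (Suc j)"] by (simp add: path_def)
  then obtain i' where p: "path j K (rs(j := i')) (ss(Suc j := 1))"
    and eq: "path_map \<sigma> j K (rs(j := i')) (ss(Suc j := 1)) = \<sigma> (Suc j) (rs (Suc j)) 1 \<circ> path_map \<sigma> (Suc j) K rs ss"
    using path_extend[OF step.prems j] by blast
  have eq_on_B: "path_map \<sigma> j K (rs(j := i')) (ss(Suc j := 1)) x = path_map \<sigma> (Suc j) K rs ss x"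
    if "x \<in> B K (rs K)" for x
    using eq cond_i[of "Suc j"] path_map_mem[OF step.prems j(2) that] step.prems
    by (simp add: path_def)
  have "(rs(j := i')) K = rs K"
    using j by simp
  obtain rs' ss' where "path i K rs' ss'" "rs' K = rs K"
    "\<forall>x\<in>B K (rs K). path_map \<sigma> i K rs' ss' x = path_map \<sigma> j K (rs(j := i')) (ss(Suc j := 1)) x"
    using step.IH[OF p] \<open>(rs(j := i')) K = rs K\<close> by metis
  then show ?case
    using eq_on_B by auto
qed

lemma path_image_tau_block:
  assumes "path n K rs ss" "1 \<le> n" "n \<le> K"
  obtains RS SS where "admissible m B \<kappa> \<sigma> K RS SS" "RS K = rs K"
    "\<And>x. x \<in> B K (rs K) \<Longrightarrow> tau_comp \<sigma> K RS SS x = path_map \<sigma> n K rs ss x"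
proof -
  obtain RS ss' where p: "path 1 K RS ss'" "RS K = rs K"
    and eq: "\<And>x. x \<in> B K (rs K) \<Longrightarrow> path_map \<sigma> 1 K RS ss' x = path_map \<sigma> n K rs ss x"
    using path_lower[OF assms(1) _ assms(2,3)] by auto
  define SS where "SS = ss'(1 := 1)"
  have p': "path 1 K RS SS"
    using p(1) by (simp add: path_def SS_def)
  have "admissible m B \<kappa> \<sigma> K RS SS"
    unfolding admissible_def
  proof (intro conjI ballI)
    fix l assume "l \<in> {1..K}"
    then show "RS l \<in> {1..m l}" "SS l \<in> {1..\<kappa> l (RS l)}"
      using p' kappa_pos[of 1 "RS 1"] by (cases "l = 1"; auto simp: path_def SS_def)+
  next
    fix l assume "l \<in> {2..K}"
    then show "\<sigma> l (RS l) (SS l) ` B l (RS l) \<subseteq> B (l - 1) (RS (l - 1))"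
      using p' by (auto simp: path_def)
  qed
  moreover have "tau_comp \<sigma> K RS SS x = path_map \<sigma> n K rs ss x" if x: "x \<in> B K (rs K)" for x
  proof -
    have "tau_comp \<sigma> K RS SS = \<sigma> 1 (RS 1) 1 \<circ> path_map \<sigma> 1 K RS ss'"
      using path_map_trans[of 0 1 K \<sigma> RS SS] path_map_cong[of 1 K RS RS SS ss' \<sigma>] assms
      by (simp add: tau_comp_eq_path_map SS_def)
    moreover have "path_map \<sigma> 1 K RS ss' x \<in> B 1 (RS 1)"
      using path_map_mem[OF p(1)] x p(2) assms by simp
    ultimately show ?thesis
      using cond_i[of 1 "RS 1"] p(1) eq[OF x] by (simp add: path_def)
  qed
  ultimately show thesis
    using that p(2) by blast
qed

lemma tau_comp_inj:
  assumes "admissible m B \<kappa> \<sigma> K rs ss" "admissible m B \<kappa> \<sigma> K rs' ss'"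
    and "x \<in> BB B K (rs K)" "x' \<in> BB B K (rs' K)"
    and "tau_comp \<sigma> K rs ss x = tau_comp \<sigma> K rs' ss' x'"
  shows "x = x' \<and> (\<forall>i\<in>{1..K}. rs i = rs' i \<and> ss i = ss' i)"
  using assms
proof (induction K arbitrary: x x')
  case 0
  then show ?case by simp
next
  case (Suc K)
  define r s r' s' where "r = rs (Suc K)" "s = ss (Suc K)" "r' = rs' (Suc K)" "s' = ss' (Suc K)"
  have ranges: "r \<in> {1..m (Suc K)}" "s \<in> {1..\<kappa> (Suc K) r}" "r' \<in> {1..m (Suc K)}" "s' \<in> {1..\<kappa> (Suc K) r'}"
    using Suc.prems(1,2) unfolding admissible_def r_s_r'_s'_def by auto
  have x: "x \<in> B (Suc K) r" "x' \<in> B (Suc K) r'"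
    using Suc.prems(3,4) by (simp_all add: BB_def r_s_r'_s'_def)
  have into: "\<sigma> (Suc K) (rs (Suc K)) (ss (Suc K)) ` B (Suc K) (rs (Suc K)) \<subseteq> BB B K (rs K)"
    if "admissible m B \<kappa> \<sigma> (Suc K) rs ss" for rs ss
    using admissible_step[OF that, of "Suc K"] by (cases "K = 0") (auto simp: BB_def)
  have IH: "\<sigma> (Suc K) r s x = \<sigma> (Suc K) r' s' x' \<and> (\<forall>i\<in>{1..K}. rs i = rs' i \<and> ss i = ss' i)"
  proof (rule Suc.IH)
    show "admissible m B \<kappa> \<sigma> K rs ss" "admissible m B \<kappa> \<sigma> K rs' ss'"
      using admissible_mono[OF Suc.prems(1), of K] admissible_mono[OF Suc.prems(2), of K] by simp_all
    show "\<sigma> (Suc K) r s x \<in> BB B K (rs K)" "\<sigma> (Suc K) r' s' x' \<in> BB B K (rs' K)"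
      using into[OF Suc.prems(1)] into[OF Suc.prems(2)] x unfolding r_s_r'_s'_def by auto
    show "tau_comp \<sigma> K rs ss (\<sigma> (Suc K) r s x) = tau_comp \<sigma> K rs' ss' (\<sigma> (Suc K) r' s' x')"
      using Suc.prems(5) by (simp add: r_s_r'_s'_def)
  qed
  have "(r, s) = (r', s')"
  proof (rule ccontr)
    assume "(r, s) \<noteq> (r', s')"
    with ranges have "\<sigma> (Suc K) r s ` B (Suc K) r \<inter> \<sigma> (Suc K) r' s' ` B (Suc K) r' = {}"
      by (intro cond_iii_disj) simp_all
    then show False
      using IH x by blast
  qed
  then have "x = x'"
    using IH x sigma_inj_on[of "Suc K" r s] ranges by (auto dest: inj_onD)
  then show ?case
    using IH \<open>(r, s) = (r', s')\<close> by (auto simp: r_s_r'_s'_def le_Suc_eq)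
qed

lemma tau_block_nested:
  assumes admK: "admissible m B \<kappa> \<sigma> K RS SS" and admj: "admissible m B \<kappa> \<sigma> j rs ss"
    and j: "1 \<le> j" "j \<le> K"
    and u: "u \<in> tau_block K RS SS" "u \<in> tau_block j rs ss"
  shows "tau_block K RS SS \<subseteq> tau_block j rs ss"
proof -
  have split: "tau_comp \<sigma> K RS SS = tau_comp \<sigma> j RS SS \<circ> path_map \<sigma> j K RS SS"
    using path_map_trans[of 0 j K \<sigma> RS SS] j by (simp add: tau_comp_eq_path_map)
  have into: "path_map \<sigma> j K RS SS w \<in> B j (RS j)" if "w \<in> B K (RS K)" for w
    using path_map_mem[OF path_of_admissible[OF admK j] j(2) that] .
  obtain w where w: "w \<in> B K (RS K)" "u = tau_comp \<sigma> K RS SS w"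
    using u(1) by blast
  obtain w' where w': "w' \<in> B j (rs j)" "u = tau_comp \<sigma> j rs ss w'"
    using u(2) by blast
  have eq: "tau_comp \<sigma> j RS SS (path_map \<sigma> j K RS SS w) = tau_comp \<sigma> j rs ss w'"
    using w(2) w'(2) split by simp
  have "BB B j = B j"
    using j by (simp add: BB_def fun_eq_iff)
  then have agree: "\<forall>i\<in>{1..j}. RS i = rs i \<and> SS i = ss i"
    using tau_comp_inj[OF admissible_mono[OF admK j(2)] admj _ _ eq] into[OF w(1)] w'(1) by simp
  then have tau_eq: "tau_comp \<sigma> j RS SS = tau_comp \<sigma> j rs ss"
    unfolding tau_comp_eq_path_map by (intro path_map_cong) auto
  have "RS j = rs j"
    using agree j by simp
  show ?thesis
  proof
    fix v assume "v \<in> tau_block K RS SS"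
    then obtain w where "w \<in> B K (RS K)" "v = tau_comp \<sigma> j rs ss (path_map \<sigma> j K RS SS w)"
      using split tau_eq by auto
    then show "v \<in> tau_block j rs ss"
      using into \<open>RS j = rs j\<close> by auto
  qed
qed

lemma eventually_constant_on_tau_blocks:
  assumes n: "1 \<le> n" and f: "f \<in> CU m B n"
  obtains K where "n \<le> K"
    "\<And>RS SS. admissible m B \<kappa> \<sigma> K RS SS \<Longrightarrow> tau_block K RS SS \<subseteq> UU m B n \<Longrightarrow>
       f constant_on tau_block K RS SS"
proof -
  have fc: "continuous_on (UU m B n) f"
    using f by (simp add: CU_def)
  obtain \<F> where \<F>: "finite \<F>" "\<F> \<subseteq> tau_family m B \<kappa> \<sigma>" "UU m B n \<subseteq> \<Union>\<F>"
    and const: "\<And>b. b \<in> \<F> \<Longrightarrow> f constant_on b"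
    using compact_cover_constant_on_basis[OF tau_basis compact_UU[OF n] open_UU[OF n] fc] by blast
  have "\<forall>b\<in>\<F>. \<exists>l rs ss. b = tau_block l rs ss \<and> 1 \<le> l \<and> admissible m B \<kappa> \<sigma> l rs ss"
    using \<F>(2) unfolding tau_family_def by blast
  then obtain lev rs0 ss0 where
    block: "\<And>b. b \<in> \<F> \<Longrightarrow> b = tau_block (lev b) (rs0 b) (ss0 b)" and
    lev_pos: "\<And>b. b \<in> \<F> \<Longrightarrow> 1 \<le> lev b" and
    lev_adm: "\<And>b. b \<in> \<F> \<Longrightarrow> admissible m B \<kappa> \<sigma> (lev b) (rs0 b) (ss0 b)"
    by metis
  define K where "K = max n (Max (lev ` \<F>))"
  show thesis
  proof (rule that)
    show "n \<le> K"
      by (simp add: K_def)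
    fix RS SS
    assume adm: "admissible m B \<kappa> \<sigma> K RS SS" and sub: "tau_block K RS SS \<subseteq> UU m B n"
    show "f constant_on tau_block K RS SS"
    proof (cases "B K (RS K) = {}")
      case True
      then show ?thesis by (simp add: constant_on_def)
    next
      case False
      then obtain u where u: "u \<in> tau_block K RS SS"
        by blast
      then obtain b where b: "b \<in> \<F>" "u \<in> b"
        using sub \<F>(3) by blast
      have "lev b \<le> Max (lev ` \<F>)"
        using b(1) \<F>(1) by (intro Max_ge) auto
      then have "lev b \<le> K"
        by (simp add: K_def)
      from b(2) have "u \<in> tau_block (lev b) (rs0 b) (ss0 b)"
        by (subst (asm) block[OF b(1)])
      from tau_block_nested[OF adm lev_adm[OF b(1)] lev_pos[OF b(1)] \<open>lev b \<le> K\<close> u this]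
      have "tau_block K RS SS \<subseteq> b"
        by (subst block[OF b(1)])
      then show ?thesis
        using const[OF b(1)] by (rule constant_on_subset[rotated])
    qed
  qed
qed

lemma trans_map_phi_constant_on_path:
  assumes n: "1 \<le> n" "n \<le> j" "j \<le> K"
    and fine: "\<And>RS SS. admissible m B \<kappa> \<sigma> K RS SS \<Longrightarrow> tau_block K RS SS \<subseteq> UU m B n \<Longrightarrow>
       f constant_on tau_block K RS SS"
    and "path j K rs ss"
  shows "(trans_map (phi m B \<kappa> \<sigma>) n (j - n) f \<circ> path_map \<sigma> j K rs ss) constant_on B K (rs K)"
  using n(2) \<open>path j K rs ss\<close> n(3)
proof (induction j arbitrary: rs ss rule: dec_induct)
  case base
  obtain RS SS where adm: "admissible m B \<kappa> \<sigma> K RS SS" "RS K = rs K"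
    and tau: "\<And>x. x \<in> B K (rs K) \<Longrightarrow> tau_comp \<sigma> K RS SS x = path_map \<sigma> n K rs ss x"
    using path_image_tau_block[OF base.prems(1) n(1) base.prems(2)] by blast
  have block: "tau_block K RS SS = path_map \<sigma> n K rs ss ` B K (rs K)"
    using adm(2) tau by (auto simp: image_def)
  have "path_map \<sigma> n K rs ss ` B K (rs K) \<subseteq> UU m B n"
    using path_map_mem[OF base.prems] path_of_admissible n(1) base.prems(1)
    by (auto simp: UU_eq[OF n(1)] path_def)
  then have "f constant_on path_map \<sigma> n K rs ss ` B K (rs K)"
    using fine[OF adm(1)] block by simp
  then show ?case
    by (auto simp: constant_on_def)
next
  case (step j)
  define h where "h = trans_map (phi m B \<kappa> \<sigma>) n (j - n) f"
  define r where "r = rs (Suc j)"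
  have j: "1 \<le> j" "Suc j \<le> K"
    using n(1) step.hyps step.prems(2) by auto
  have r: "r \<in> {1..m (Suc j)}"
    using step.prems(1) by (simp add: path_def r_def)
  have summand: "(\<lambda>x. h (\<sigma> (Suc j) r s (path_map \<sigma> (Suc j) K rs ss x))) constant_on B K (rs K)"
    if s: "s \<in> {1..\<kappa> (Suc j) r}" for s
  proof -
    obtain i where p: "path j K (rs(j := i)) (ss(Suc j := s))"
      and eq: "path_map \<sigma> j K (rs(j := i)) (ss(Suc j := s)) = \<sigma> (Suc j) r s \<circ> path_map \<sigma> (Suc j) K rs ss"
      using path_extend[OF step.prems(1) j] s unfolding r_def by blast
    have "(h \<circ> path_map \<sigma> j K (rs(j := i)) (ss(Suc j := s))) constant_on B K ((rs(j := i)) K)"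
      unfolding h_def by (rule step.IH[OF p]) (use step.prems(2) in simp)
    then show ?thesis
      using eq j by (simp add: comp_def)
  qed
  have "(\<lambda>x. \<Sum>s = 1..\<kappa> (Suc j) r. h (\<sigma> (Suc j) r s (path_map \<sigma> (Suc j) K rs ss x))) constant_on B K (rs K)"
    by (rule constant_on_sum) (rule summand)
  moreover have "trans_map (phi m B \<kappa> \<sigma>) n (Suc j - n) f = phi m B \<kappa> \<sigma> j h"
    using step.hyps by (simp add: h_def Suc_diff_le)
  then have "(\<Sum>s = 1..\<kappa> (Suc j) r. h (\<sigma> (Suc j) r s (path_map \<sigma> (Suc j) K rs ss x))) =
      (trans_map (phi m B \<kappa> \<sigma>) n (Suc j - n) f \<circ> path_map \<sigma> (Suc j) K rs ss) x"
    if "x \<in> B K (rs K)" for x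
    using phi_eq_sum[OF r path_map_mem[OF step.prems(1) j(2) that, folded r_def]] by simp
  ultimately show ?case
    by (rule constant_onE)
qed

lemma trans_map_phi_eventually_CUt:
  assumes n: "1 \<le> n" and f: "f \<in> CU m B n"
  shows "\<exists>k\<ge>n. trans_map (phi m B \<kappa> \<sigma>) n (k - n) f \<in> CUt m B k"
proof (rule eventually_constant_on_tau_blocks[OF n f])
  fix K assume K: "n \<le> K"
    and fine: "\<And>RS SS. admissible m B \<kappa> \<sigma> K RS SS \<Longrightarrow> tau_block K RS SS \<subseteq> UU m B n \<Longrightarrow>
       f constant_on tau_block K RS SS"
  have "trans_map (phi m B \<kappa> \<sigma>) n (K - n) f \<in> CU m B K"
    by (rule trans_map_closed[where G="CU m B", OF phi_CU n K f])
  moreover have "trans_map (phi m B \<kappa> \<sigma>) n (K - n) f constant_on B K r" if "r \<in> {1..m K}" for r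
  proof -
    have "path K K (\<lambda>_. r) (\<lambda>_. 1)"
      using that by (simp add: path_def)
    from trans_map_phi_constant_on_path[OF n K order.refl fine this]
    show ?thesis
      by (simp add: path_map_self)
  qed
  ultimately show ?thesis
    using K unfolding CUt_def constant_on_def by blast
qed

end

theorem mainTheorem8:
  fixes m :: "nat \<Rightarrow> nat" and B :: "nat \<Rightarrow> nat \<Rightarrow> 'a::metric_space set"
    and \<kappa> :: "nat \<Rightarrow> nat \<Rightarrow> nat" and \<sigma> :: "nat \<Rightarrow> nat \<Rightarrow> nat \<Rightarrow> 'a \<Rightarrow> 'a"
  assumes compact_X: "compact (UNIV :: 'a set)"
    and clopen_basis: "\<exists>\<B> :: 'a set set. topological_basis \<B> \<and> (\<forall>b\<in>\<B>. closed b)"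
    and m_pos: "\<And>n. n \<ge> 1 \<Longrightarrow> m n \<ge> 1"
    and B_nonempty: "\<And>n r. n \<ge> 1 \<Longrightarrow> r \<in> {1..m n} \<Longrightarrow> B n r \<noteq> {}"
    and B_clopen: "\<And>n r. n \<ge> 1 \<Longrightarrow> r \<in> {1..m n} \<Longrightarrow> clopen_set (B n r)"
    and B_disj: "\<And>n r r'. n \<ge> 1 \<Longrightarrow> r \<in> {1..m n} \<Longrightarrow> r' \<in> {1..m n} \<Longrightarrow> r \<noteq> r' \<Longrightarrow>
                   B n r \<inter> B n r' = {}"
    and kappa_pos: "\<And>n r. n \<ge> 1 \<Longrightarrow> r \<in> {1..m n} \<Longrightarrow> \<kappa> n r \<ge> 1"
    and sigma_ph: "\<And>n r s. n \<ge> 1 \<Longrightarrow> r \<in> {1..m n} \<Longrightarrow> s \<in> {1..\<kappa> n r} \<Longrightarrow>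
                   partial_homeo (B n r) (\<sigma> n r s)"
    and cond_i: "\<And>n r x. n \<ge> 1 \<Longrightarrow> r \<in> {1..m n} \<Longrightarrow> x \<in> B n r \<Longrightarrow> \<sigma> n r 1 x = x"
    and cond_ii: "\<And>n r s. n \<ge> 1 \<Longrightarrow> r \<in> {1..m n} \<Longrightarrow> s \<in> {1..\<kappa> n r} \<Longrightarrow>
                   \<exists>i\<in>{1..mm m (n - 1)}. \<sigma> n r s ` B n r \<subseteq> BB B (n - 1) i"
    and cond_iii_disj: "\<And>n r s r' s'. n \<ge> 1 \<Longrightarrow> r \<in> {1..m n} \<Longrightarrow> s \<in> {1..\<kappa> n r} \<Longrightarrow>
                   r' \<in> {1..m n} \<Longrightarrow> s' \<in> {1..\<kappa> n r'} \<Longrightarrow> (r, s) \<noteq> (r', s') \<Longrightarrow>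
                   \<sigma> n r s ` B n r \<inter> \<sigma> n r' s' ` B n r' = {}"
    and cond_iii_union: "\<And>n. n \<ge> 1 \<Longrightarrow>
                   (\<Union>r\<in>{1..m n}. \<Union>s\<in>{1..\<kappa> n r}. \<sigma> n r s ` B n r) = UU m B (n - 1)"
    and tau_basis: "topological_basis (tau_family m B \<kappa> \<sigma>)"
  shows "(\<forall>n\<ge>1. \<forall>f\<in>CUt m B n. phi m B \<kappa> \<sigma> n f \<in> CUt m B (Suc n))
    \<and> bij_betw (dl_induced 1 (CU m B) (phi m B \<kappa> \<sigma>))
         (dlim 1 (CUt m B) (phi m B \<kappa> \<sigma>)) (dlim 1 (CU m B) (phi m B \<kappa> \<sigma>))
    \<and> (\<forall>A\<in>dlim 1 (CUt m B) (phi m B \<kappa> \<sigma>). \<forall>A'\<in>dlim 1 (CUt m B) (phi m B \<kappa> \<sigma>).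
         dl_induced 1 (CU m B) (phi m B \<kappa> \<sigma>) (dl_add 1 (CUt m B) (phi m B \<kappa> \<sigma>) A A')
         = dl_add 1 (CU m B) (phi m B \<kappa> \<sigma>)
             (dl_induced 1 (CU m B) (phi m B \<kappa> \<sigma>) A) (dl_induced 1 (CU m B) (phi m B \<kappa> \<sigma>) A'))"
proof -
  interpret tower_system m B \<kappa> \<sigma>
    by unfold_locales (fact compact_X B_clopen B_disj kappa_pos sigma_ph cond_i cond_ii cond_iii_disj tau_basis)+
  have CUt_CU: "\<And>n. CUt m B n \<subseteq> CU m B n"
    by (rule CUt_subset_CU)
  have "\<forall>n\<ge>1. \<forall>f\<in>CUt m B n. phi m B \<kappa> \<sigma> n f \<in> CUt m B (Suc n)"
    using phi_CUt by blast
  moreover have "bij_betw (dl_induced 1 (CU m B) (phi m B \<kappa> \<sigma>))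
      (dlim 1 (CUt m B) (phi m B \<kappa> \<sigma>)) (dlim 1 (CU m B) (phi m B \<kappa> \<sigma>))"
    by (rule bij_betw_dl_induced[OF CUt_CU trans_map_phi_eventually_CUt])
  moreover have "\<forall>A\<in>dlim 1 (CUt m B) (phi m B \<kappa> \<sigma>). \<forall>A'\<in>dlim 1 (CUt m B) (phi m B \<kappa> \<sigma>).
      dl_induced 1 (CU m B) (phi m B \<kappa> \<sigma>) (dl_add 1 (CUt m B) (phi m B \<kappa> \<sigma>) A A')
      = dl_add 1 (CU m B) (phi m B \<kappa> \<sigma>)
          (dl_induced 1 (CU m B) (phi m B \<kappa> \<sigma>) A) (dl_induced 1 (CU m B) (phi m B \<kappa> \<sigma>) A')"
  proof (intro ballI)
    fix A A' assume A: "A \<in> dlim 1 (CUt m B) (phi m B \<kappa> \<sigma>)" and A': "A' \<in> dlim 1 (CUt m B) (phi m B \<kappa> \<sigma>)"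
    show "dl_induced 1 (CU m B) (phi m B \<kappa> \<sigma>) (dl_add 1 (CUt m B) (phi m B \<kappa> \<sigma>) A A')
      = dl_add 1 (CU m B) (phi m B \<kappa> \<sigma>)
          (dl_induced 1 (CU m B) (phi m B \<kappa> \<sigma>) A) (dl_induced 1 (CU m B) (phi m B \<kappa> \<sigma>) A')"
      by (rule dl_induced_dl_add[OF CUt_CU phi_plus phi_CUt phi_CU CUt_plus CU_plus A A'])
  qed
  ultimately show ?thesis
    by blast
qed

end
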